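(* Let $\mathcal{D}=(D,B,\mu)$ be a blueprint such that $B$ contains both a positive and a negative bias. Then there exist $\varepsilon_0>0$ and $C>0$, depending only on $B$, such that for every $\varepsilon\in(0,\varepsilon_0)$ there is a probability measure $\mu'$ on $B$ with $\sum_{b\in B}\mu'(b)b=0$ such that the blueprint $\mathcal{D}'=(D,B,\mu')$ satisfies: $\mathsf{Completeness}(\mathcal{D}')=\mathsf{Completeness}(\mathcal{D})$, $\mathsf{Soundness}(\mathcal{D}')\le\mathsf{Soundness}(\mathcal{D})+C\varepsilon$, and $\mu'(b)\ge\varepsilon$ for every $b\in B$.
   Context: $\Phi$ is the standard normal CDF. For $\rho\in[-1,1]$, $\Gamma_\rho(q_1,q_2)=\Pr[x\le\Phi^{-1}(q_1),\,y\le\Phi^{-1}(q_2)]$ for jointly Gaussian standard normals $x,y$ with correlation $\rho$. A configuration is $\theta=(b_i,b_j,b_{ij})\in[-1,1]^3$ with $-1+|b_i+b_j|\le b_{ij}\le1-|b_i-b_j|$. Its relative pairwise bias is $\rho(\theta)=\frac{b_{ij}-b_ib_j}{\sqrt{(1-b_i^2)(1-b_j^2)}}$ (or $0$ if the denominator is $0$). A blueprint $\mathcal{D}=(D,B,\mu)$: $D$ a finitely supported distribution on configurations, $B$ the set of biases (first two coordinates) appearing in its support, $\mu$ a probability measure on $B$ with $\sum_b\mu(b)b=0$. $\mathsf{Completeness}(\mathcal{D})=\mathbb{E}_{D}\frac{1-b_{ij}}{2}$. For $t:B\to[-1,1]$, $\mathsf{Soundness}(\mathcal{D},t)=\mathbb{E}_{\theta\sim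 D}[\frac{1-t(b_i)}{2}+\frac{1-t(b_j)}{2}-2\Gamma_{\rho(\theta)}(\frac{1-t(b_i)}{2},\frac{1-t(b_j)}{2})]$, and $\mathsf{Soundness}(\mathcal{D})$ is its maximum over $t$ with $\sum_b\mu(b)t(b)=0$. *)

theory Defs
  imports "HOL-Probability.Probability"
begin

definition std_normal :: "real measure" where
  "std_normal = density lborel std_normal_density"

definition Phi :: "real \<Rightarrow> real" where
  "Phi x = measure std_normal {..x}"

definition Phi_inv :: "real \<Rightarrow> ereal" where
  "Phi_inv q = (if q \<le> 0 then -\<infinity> else if 1 \<le> q then \<infinity>
                else ereal (THE x. Phi x = q))"

text \<open>Gamma_rho(q1,q2) = Pr[x \<le> Phi_inv q1, y \<le> Phi_inv q2] for standard normals x, y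
  with correlation rho, realised as x = g1, y = rho g1 + sqrt(1-rho^2) g2
  with g1, g2 independent standard normals.\<close>
definition Gamma :: "real \<Rightarrow> real \<Rightarrow> real \<Rightarrow> real" where
  "Gamma \<rho> q1 q2 = measure (std_normal \<Otimes>\<^sub>M std_normal)
     {(g1, g2). ereal g1 \<le> Phi_inv q1 \<and>
                ereal (\<rho> * g1 + sqrt (1 - \<rho>\<^sup>2) * g2) \<le> Phi_inv q2}"

type_synonym config = "real \<times> real \<times> real"

definition is_config :: "config \<Rightarrow> bool" where
  "is_config \<theta> = (case \<theta> of (bi, bj, bij_) \<Rightarrow>
     bi \<in> {-1..1} \<and> bj \<in> {-1..1} \<and> bij_ \<in> {-1..1} \<and>
     -1 + \<bar>bi + bj\<bar> \<le> bij_ \<and> bij_ \<le> 1 - \<bar>bi - bj\<bar>)"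

definition rel_bias :: "config \<Rightarrow> real" where
  "rel_bias \<theta> = (case \<theta> of (bi, bj, bij_) \<Rightarrow>
     (let d = sqrt ((1 - bi\<^sup>2) * (1 - bj\<^sup>2)) in
      if d = 0 then 0 else (bij_ - bi * bj) / d))"

definition biases :: "config pmf \<Rightarrow> real set" where
  "biases D = (\<lambda>\<theta>. fst \<theta>) ` set_pmf D \<union> (\<lambda>\<theta>. fst (snd \<theta>)) ` set_pmf D"

definition is_blueprint :: "config pmf \<Rightarrow> real set \<Rightarrow> real pmf \<Rightarrow> bool" where
  "is_blueprint D B \<mu> \<longleftrightarrow>
     finite (set_pmf D) \<and> (\<forall>\<theta>\<in>set_pmf D. is_config \<theta>) \<and> B = biases D \<and>
     set_pmf \<mu> \<subseteq> B \<and> (\<Sum>b\<in>B. pmf \<mu> b * b) = 0"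

definition completeness :: "config pmf \<Rightarrow> real" where
  "completeness D = (\<Sum>\<theta>\<in>set_pmf D. pmf D \<theta> * ((1 - snd (snd \<theta>)) / 2))"

definition soundness_t :: "config pmf \<Rightarrow> (real \<Rightarrow> real) \<Rightarrow> real" where
  "soundness_t D t = (\<Sum>\<theta>\<in>set_pmf D. pmf D \<theta> *
     (let qi = (1 - t (fst \<theta>)) / 2; qj = (1 - t (fst (snd \<theta>))) / 2 in
      qi + qj - 2 * Gamma (rel_bias \<theta>) qi qj))"

definition soundness :: "config pmf \<Rightarrow> real set \<Rightarrow> real pmf \<Rightarrow> real" where
  "soundness D B \<mu> = Sup {soundness_t D t | t.
     (\<forall>b\<in>B. t b \<in> {-1..1}) \<and> (\<Sum>b\<in>B. pmf \<mu> b * t b) = 0}"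

end

theory Submission
  imports Defs
begin

text \<open>Fix once and for all a mean-zero distribution \<open>\<nu>\<close> on \<open>B\<close> with \<open>\<nu>(b) \<ge> m > 0\<close>
  for every \<open>b\<close>, and take \<open>\<mu>' = (1 - \<delta>) \<mu> + \<delta> \<nu>\<close> with \<open>\<delta> = \<epsilon> / m\<close>; then \<open>\<mu>'(b) \<ge> \<epsilon>\<close>.
  A threshold function \<open>t\<close> balanced for \<open>\<mu>'\<close> is out of balance for \<open>\<mu>\<close> by at most \<open>2 \<delta>\<close>,
  and shifting and rescaling it into a balanced one moves it by at most \<open>4 \<delta>\<close> in sup norm.
  Both arguments of \<open>Gamma\<close> are quantiles of standard normal variables, so \<open>Gamma\<close> is
  monotone and 1-Lipschitz in each argument; hence the soundness of a fixed \<open>t\<close> is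
  1-Lipschitz in \<open>t\<close>, and the soundness of \<open>\<mu>'\<close> exceeds that of \<open>\<mu>\<close> by at most
  \<open>4 \<delta> = (4 / m) \<epsilon>\<close>.\<close>

section \<open>The standard normal distribution\<close>

lemma sets_std_normal [simp, measurable_cong]: "sets std_normal = sets borel"
  by (simp add: std_normal_def)

lemma space_std_normal [simp]: "space std_normal = UNIV"
  by (simp add: std_normal_def)

lemma prob_space_std_normal: "prob_space std_normal"
  unfolding std_normal_def by (rule prob_space_normal_density) simp

lemma real_distribution_std_normal: "real_distribution std_normal"
  using prob_space_std_normal
  by (simp add: real_distribution_def real_distribution_axioms_def std_normal_def)

lemma Phi_eq_cdf: "Phi = cdf std_normal"
  by (simp add: fun_eq_iff Phi_def cdf_def)

lemma emeasure_std_normal_interval_pos: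
  assumes "x < y"
  shows "emeasure std_normal {x<..y} > 0"
proof -
  have density_pos: "std_normal_density z * indicator {x<..y} z > 0" if "z \<in> {x<..y}" for z
    using that by (simp add: normal_density_pos)
  have "emeasure std_normal {x<..y}
      = (\<integral>\<^sup>+z. ennreal (std_normal_density z * indicator {x<..y} z) \<partial>lborel)"
    unfolding std_normal_def by (simp add: emeasure_density ennreal_mult' ennreal_indicator)
  moreover have "(\<integral>\<^sup>+z. ennreal (std_normal_density z * indicator {x<..y} z) \<partial>lborel) \<noteq> 0"
  proof
    assume "(\<integral>\<^sup>+z. ennreal (std_normal_density z * indicator {x<..y} z) \<partial>lborel) = 0"
    then have "AE z in lborel. ennreal (std_normal_density z * indicator {x<..y} z) = 0"
      by (subst (asm) nn_integral_0_iff_AE) auto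
    then have "AE z in lborel. z \<notin> {x<..y}"
      by (rule eventually_mono) (use density_pos in fastforce)
    then have "emeasure lborel {x<..y} = 0"
      by (subst (asm) AE_iff_measurable[where P = "\<lambda>z. z \<notin> {x<..y}"]) auto
    with assms show False by simp
  qed
  ultimately show ?thesis by (simp add: zero_less_iff_neq_zero)
qed

lemma Phi_strict_mono: "strict_mono Phi"
proof
  fix x y :: real
  assume "x < y"
  interpret finite_borel_measure std_normal
    by (rule real_distribution.finite_borel_measure_M[OF real_distribution_std_normal])
  have "Phi y - Phi x = measure std_normal {x<..y}"
    unfolding Phi_eq_cdf by (rule cdf_diff_eq[OF \<open>x < y\<close>])
  moreover have "measure std_normal {x<..y} > 0"
    using emeasure_std_normal_interval_pos[OF \<open>x < y\<close>] by (simp add: emeasure_eq_measure)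
  ultimately show "Phi x < Phi y" by simp
qed

lemma measure_std_normal_singleton: "measure std_normal {x} = 0"
proof -
  have "emeasure std_normal {x} = (\<integral>\<^sup>+z. ennreal (std_normal_density z) * indicator {x} z \<partial>lborel)"
    unfolding std_normal_def by (simp add: emeasure_density)
  also have "\<dots> = 0"
    by (rule nn_integral_null_set) (auto intro: countable_imp_null_set_lborel)
  finally show ?thesis by (simp add: measure_def)
qed

lemma isCont_Phi: "isCont Phi x"
  unfolding Phi_eq_cdf using measure_std_normal_singleton
  by (simp add: finite_borel_measure.isCont_cdf
      real_distribution.finite_borel_measure_M[OF real_distribution_std_normal])

lemma Phi_inv_interior:
  assumes "0 < q" "q < 1"
  obtains x where "Phi_inv q = ereal x" "Phi x = q"
proof -
  interpret real_distribution std_normal by (rule real_distribution_std_normal)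
  have "eventually (\<lambda>x. Phi x < q) at_bot"
    using cdf_lim_at_bot assms(1) unfolding Phi_eq_cdf by (rule order_tendstoD)
  then obtain a where a: "Phi a < q" by (auto simp: eventually_at_bot_linorder)
  have "eventually (\<lambda>x. q < Phi x) at_top"
    using cdf_lim_at_top_prob assms(2) unfolding Phi_eq_cdf by (rule order_tendstoD)
  then obtain b where b: "q < Phi b" by (auto simp: eventually_at_top_linorder)
  have "a \<le> b"
    using a b strict_mono_less_eq[OF Phi_strict_mono, of a b] by simp
  then obtain x where x: "Phi x = q"
    using IVT[of Phi a q b] a b isCont_Phi by fastforce
  have "(THE x. Phi x = q) = x"
    by (rule the_equality) (use x strict_mono_eq[OF Phi_strict_mono] in auto)
  with x assms show thesis by (intro that) (auto simp: Phi_inv_def)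
qed

lemma Phi_inv_mono:
  assumes "q \<le> q'"
  shows "Phi_inv q \<le> Phi_inv q'"
proof -
  consider "q \<le> 0" | "1 \<le> q'" | "0 < q" "q' < 1" by linarith
  then show ?thesis
  proof cases
    case 3
    obtain x where x: "Phi_inv q = ereal x" "Phi x = q"
      using Phi_inv_interior[of q] 3 assms by auto
    obtain x' where x': "Phi_inv q' = ereal x'" "Phi x' = q'"
      using Phi_inv_interior[of q'] 3 assms by auto
    have "x \<le> x'"
      using assms x(2) x'(2) strict_mono_less_eq[OF Phi_strict_mono, of x x'] by simp
    then show ?thesis using x x' by simp
  qed (auto simp: Phi_inv_def)
qed

lemma measure_std_normal_le_Phi_inv:
  assumes "0 \<le> q" "q \<le> 1"
  shows "measure std_normal {g. ereal g \<le> Phi_inv q} = q"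
proof -
  interpret prob_space std_normal by (rule prob_space_std_normal)
  consider "q = 0" | "q = 1" | "0 < q" "q < 1" using assms by linarith
  then show ?thesis
  proof cases
    case 3
    then obtain x where "Phi_inv q = ereal x" "Phi x = q" by (rule Phi_inv_interior)
    then show ?thesis by (simp add: Phi_def atMost_def)
  qed (use prob_space in \<open>auto simp: Phi_inv_def\<close>)
qed

lemma measure_diff_le_quantile_gap:
  assumes "prob_space M" and X: "distributed M lborel X std_normal_density"
    and S: "S \<in> sets M" and T: "T \<in> sets M" and "S \<subseteq> T"
    and gap: "\<And>w. w \<in> T - S \<Longrightarrow> Phi_inv q < ereal (X w) \<and> ereal (X w) \<le> Phi_inv q'"
    and q: "0 \<le> q" "q \<le> q'" "q' \<le> 1"
  shows "measure M T - measure M S \<le> q' - q"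
proof -
  interpret prob_space M by fact
  interpret N: prob_space std_normal by (rule prob_space_std_normal)
  have X_meas [measurable]: "X \<in> borel_measurable M"
    using distributed_measurable[OF X] by simp
  have "distr M borel X = distr M lborel X"
    by (rule distr_cong) simp_all
  then have distr_X: "distr M borel X = std_normal"
    using X by (simp add: distributed_def std_normal_def)
  define A where "A q = {g. ereal g \<le> Phi_inv q}" for q
  have A_sets [measurable]: "A q \<in> sets borel" for q
    unfolding A_def by measurable
  have "A q \<subseteq> A q'"
    using Phi_inv_mono[OF q(2)] by (auto simp: A_def)
  have "measure M T - measure M S = measure M (T - S)"
    using finite_measure_Diff[OF T S \<open>S \<subseteq> T\<close>] by simp
  also have "\<dots> \<le> measure M (X -` (A q' - A q) \<inter> space M)"
  proof (rule finite_measure_mono)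
    show "T - S \<subseteq> X -` (A q' - A q) \<inter> space M"
      using gap sets.sets_into_space[OF T] by (force simp: A_def)
  qed simp
  also have "\<dots> = measure std_normal (A q' - A q)"
    by (subst distr_X[symmetric], subst measure_distr) auto
  also have "\<dots> = measure std_normal (A q') - measure std_normal (A q)"
    using \<open>A q \<subseteq> A q'\<close> by (simp add: N.finite_measure_Diff)
  also have "\<dots> = q' - q"
    using q by (simp add: A_def measure_std_normal_le_Phi_inv)
  finally show ?thesis .
qed

section \<open>The bivariate normal probabilities \<open>Gamma\<close>\<close>

abbreviation std_normal_pair :: "(real \<times> real) measure" where
  "std_normal_pair \<equiv> std_normal \<Otimes>\<^sub>M std_normal"

lemma prob_space_std_normal_pair: "prob_space std_normal_pair"
proof -
  interpret prob_space std_normal by (rule prob_space_std_normal)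
  interpret pair_prob_space std_normal std_normal ..
  show ?thesis by (rule prob_space_axioms)
qed

lemma sets_std_normal_pair [simp, measurable_cong]:
  "sets std_normal_pair = sets (borel \<Otimes>\<^sub>M borel)"
  by (rule sets_pair_measure_cong) simp_all

lemma space_std_normal_pair [simp]: "space std_normal_pair = UNIV"
  by (simp add: space_pair_measure)

lemma distributed_std_normal_pairI:
  assumes "X \<in> borel_measurable std_normal_pair" "distr std_normal_pair borel X = std_normal"
  shows "distributed std_normal_pair lborel X std_normal_density"
proof -
  have "distr std_normal_pair lborel X = distr std_normal_pair borel X"
    by (rule distr_cong) simp_all
  then show ?thesis
    using assms unfolding distributed_def std_normal_def by simp
qed

lemma distr_fst_std_normal_pair: "distr std_normal_pair borel fst = std_normal"
proof -
  interpret prob_space std_normal by (rule prob_space_std_normal)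
  have "distr std_normal_pair borel fst = distr std_normal_pair std_normal fst"
    by (rule distr_cong) simp_all
  then show ?thesis by (simp add: distr_pair_fst)
qed

lemma distr_snd_std_normal_pair: "distr std_normal_pair borel snd = std_normal"
proof -
  interpret prob_space std_normal by (rule prob_space_std_normal)
  interpret pair_sigma_finite std_normal std_normal ..
  have "distr std_normal_pair borel snd
      = distr (distr std_normal_pair std_normal_pair (\<lambda>(x, y). (y, x))) borel snd"
    by (subst distr_pair_swap[symmetric]) simp
  also have "\<dots> = distr std_normal_pair borel (snd \<circ> (\<lambda>(x, y). (y, x)))"
    by (rule distr_distr) measurable
  also have "snd \<circ> (\<lambda>(x, y). (y, x)) = (fst :: real \<times> real \<Rightarrow> real)"
    by auto
  finally show ?thesis by (simp add: distr_fst_std_normal_pair)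
qed

lemma indep_var_fst_snd_std_normal_pair:
  "prob_space.indep_var std_normal_pair borel fst borel snd"
proof -
  interpret prob_space std_normal_pair by (rule prob_space_std_normal_pair)
  have "distr std_normal_pair (borel \<Otimes>\<^sub>M borel) (\<lambda>x. (fst x, snd x)) = std_normal_pair"
    by (simp add: distr_id2)
  then show ?thesis
    by (subst indep_var_distribution_eq)
       (simp add: distr_fst_std_normal_pair distr_snd_std_normal_pair)
qed

lemma distributed_fst_std_normal_pair:
  "distributed std_normal_pair lborel fst std_normal_density"
  by (rule distributed_std_normal_pairI[OF _ distr_fst_std_normal_pair]) measurable

lemma distributed_snd_std_normal_pair:
  "distributed std_normal_pair lborel snd std_normal_density"
  by (rule distributed_std_normal_pairI[OF _ distr_snd_std_normal_pair]) measurable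

lemma distributed_correlated_std_normal:
  assumes "\<bar>\<rho>\<bar> \<le> 1"
  shows "distributed std_normal_pair lborel (\<lambda>w. \<rho> * fst w + sqrt (1 - \<rho>\<^sup>2) * snd w)
           std_normal_density"
proof -
  interpret prob_space std_normal_pair by (rule prob_space_std_normal_pair)
  have "\<rho>\<^sup>2 \<le> 1"
    using assms by (simp add: abs_square_le_1)
  then consider "\<rho> = 0" | "\<rho>\<^sup>2 = 1" | "\<rho> \<noteq> 0" "\<rho>\<^sup>2 < 1"
    by fastforce
  then show ?thesis
  proof cases
    case 1
    then show ?thesis using distributed_snd_std_normal_pair by simp
  next
    case 2
    then have "\<rho> \<noteq> 0" "\<bar>\<rho>\<bar> = 1"
      using abs_square_eq_1 by auto
    then show ?thesis
      using normal_density_affine[OF distributed_fst_std_normal_pair zero_less_one, of \<rho> 0] 2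
      by simp
  next
    case 3
    define s where "s = sqrt (1 - \<rho>\<^sup>2)"
    have "s > 0" using 3 by (simp add: s_def)
    have "indep_var borel ((\<lambda>x. 0 + \<rho> * x) \<circ> fst) borel ((\<lambda>x. 0 + s * x) \<circ> snd)"
      by (rule indep_var_compose[OF indep_var_fst_snd_std_normal_pair]) simp_all
    moreover have "distributed std_normal_pair lborel (\<lambda>w. 0 + \<rho> * fst w)
        (normal_density (0 + \<rho> * 0) (\<bar>\<rho>\<bar> * 1))"
      using 3 by (intro normal_density_affine[OF distributed_fst_std_normal_pair]) auto
    moreover have "distributed std_normal_pair lborel (\<lambda>w. 0 + s * snd w)
        (normal_density (0 + s * 0) (\<bar>s\<bar> * 1))"
      using \<open>s > 0\<close> by (intro normal_density_affine[OF distributed_snd_std_normal_pair]) auto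
    ultimately have "distributed std_normal_pair lborel (\<lambda>w. (0 + \<rho> * fst w) + (0 + s * snd w))
        (normal_density (0 + 0) (sqrt ((\<bar>\<rho>\<bar> * 1)\<^sup>2 + (\<bar>s\<bar> * 1)\<^sup>2)))"
      using \<open>s > 0\<close> 3 by (intro add_indep_normal) (simp_all add: o_def)
    moreover have "(\<bar>\<rho>\<bar> * 1)\<^sup>2 + (\<bar>s\<bar> * 1)\<^sup>2 = 1"
      using 3 by (simp add: s_def)
    ultimately show ?thesis by (simp add: s_def)
  qed
qed

definition Gamma_event :: "real \<Rightarrow> real \<Rightarrow> real \<Rightarrow> (real \<times> real) set" where
  "Gamma_event \<rho> q1 q2 = {(g1, g2). ereal g1 \<le> Phi_inv q1 \<and>
     ereal (\<rho> * g1 + sqrt (1 - \<rho>\<^sup>2) * g2) \<le> Phi_inv q2}"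

lemma Gamma_eq_measure: "Gamma \<rho> q1 q2 = measure std_normal_pair (Gamma_event \<rho> q1 q2)"
  by (simp add: Gamma_def Gamma_event_def)

lemma Gamma_event_sets [measurable]: "Gamma_event \<rho> q1 q2 \<in> sets std_normal_pair"
proof -
  have "Gamma_event \<rho> q1 q2 = {w \<in> space std_normal_pair. ereal (fst w) \<le> Phi_inv q1 \<and>
      ereal (\<rho> * fst w + sqrt (1 - \<rho>\<^sup>2) * snd w) \<le> Phi_inv q2}"
    by (auto simp: Gamma_event_def)
  also have "\<dots> \<in> sets std_normal_pair"
    by measurable
  finally show ?thesis .
qed

lemma Gamma_event_mono:
  assumes "q1 \<le> q1'" "q2 \<le> q2'"
  shows "Gamma_event \<rho> q1 q2 \<subseteq> Gamma_event \<rho> q1' q2'"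
  using Phi_inv_mono[OF assms(1)] Phi_inv_mono[OF assms(2)]
  by (auto simp: Gamma_event_def intro: order_trans)

lemma Gamma_mono:
  assumes "q1 \<le> q1'" "q2 \<le> q2'"
  shows "Gamma \<rho> q1 q2 \<le> Gamma \<rho> q1' q2'"
proof -
  interpret prob_space std_normal_pair by (rule prob_space_std_normal_pair)
  show ?thesis
    unfolding Gamma_eq_measure
    by (rule finite_measure_mono[OF Gamma_event_mono[OF assms] Gamma_event_sets])
qed

lemma Gamma_increment_fst_le:
  assumes "0 \<le> q1" "q1 \<le> q1'" "q1' \<le> 1"
  shows "Gamma \<rho> q1' q2 - Gamma \<rho> q1 q2 \<le> q1' - q1"
  unfolding Gamma_eq_measure
  by (rule measure_diff_le_quantile_gap[OF prob_space_std_normal_pair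
        distributed_fst_std_normal_pair Gamma_event_sets Gamma_event_sets
        Gamma_event_mono[OF assms(2) order_refl] _ assms])
     (auto simp: Gamma_event_def)

lemma Gamma_increment_snd_le:
  assumes "0 \<le> q2" "q2 \<le> q2'" "q2' \<le> 1" "\<bar>\<rho>\<bar> \<le> 1"
  shows "Gamma \<rho> q1 q2' - Gamma \<rho> q1 q2 \<le> q2' - q2"
  unfolding Gamma_eq_measure
  by (rule measure_diff_le_quantile_gap[OF prob_space_std_normal_pair
        distributed_correlated_std_normal[OF assms(4)] Gamma_event_sets Gamma_event_sets
        Gamma_event_mono[OF order_refl assms(2)] _ assms(1-3)])
     (auto simp: Gamma_event_def)

text \<open>\<open>q1 + q2 - 2 Gamma\<close> is the probability that exactly one of the two correlated
  Gaussians falls below its threshold.\<close>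
definition cut_prob :: "real \<Rightarrow> real \<Rightarrow> real \<Rightarrow> real" where
  "cut_prob \<rho> q1 q2 = q1 + q2 - 2 * Gamma \<rho> q1 q2"

lemma cut_prob_lipschitz_fst:
  assumes "a \<in> {0..1}" "a' \<in> {0..1}"
  shows "\<bar>cut_prob \<rho> a b - cut_prob \<rho> a' b\<bar> \<le> \<bar>a - a'\<bar>"
proof -
  have "\<bar>cut_prob \<rho> x b - cut_prob \<rho> x' b\<bar> \<le> x' - x"
    if "0 \<le> x" "x \<le> x'" "x' \<le> 1" for x x'
    using Gamma_mono[OF \<open>x \<le> x'\<close> order_refl, of \<rho> b] Gamma_increment_fst_le[OF that, of \<rho> b]
    by (simp add: cut_prob_def)
  from this[of a a'] this[of a' a] assms show ?thesis
    by (cases "a \<le> a'") (auto simp: abs_minus_commute)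
qed

lemma cut_prob_lipschitz_snd:
  assumes "b \<in> {0..1}" "b' \<in> {0..1}" "\<bar>\<rho>\<bar> \<le> 1"
  shows "\<bar>cut_prob \<rho> a b - cut_prob \<rho> a b'\<bar> \<le> \<bar>b - b'\<bar>"
proof -
  have "\<bar>cut_prob \<rho> a y - cut_prob \<rho> a y'\<bar> \<le> y' - y"
    if "0 \<le> y" "y \<le> y'" "y' \<le> 1" for y y'
    using Gamma_mono[OF order_refl \<open>y \<le> y'\<close>, of \<rho> a] Gamma_increment_snd_le[OF that assms(3), of a]
    by (simp add: cut_prob_def)
  from this[of b b'] this[of b' b] assms show ?thesis
    by (cases "b \<le> b'") (auto simp: abs_minus_commute)
qed

lemma cut_prob_lipschitz:
  assumes "a \<in> {0..1}" "a' \<in> {0..1}" "b \<in> {0..1}" "b' \<in> {0..1}" "\<bar>\<rho>\<bar> \<le> 1"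
  shows "\<bar>cut_prob \<rho> a b - cut_prob \<rho> a' b'\<bar> \<le> \<bar>a - a'\<bar> + \<bar>b - b'\<bar>"
  using cut_prob_lipschitz_fst[OF assms(1,2), of \<rho> b] cut_prob_lipschitz_snd[OF assms(3-5), of a']
  by linarith

lemma bias_deviation_sq_le:
  fixes x y w :: real
  assumes "\<bar>x\<bar> \<le> 1" "\<bar>y\<bar> \<le> 1" "x * y \<le> w" "w \<le> 1 - \<bar>x - y\<bar>"
  shows "(w - x * y)\<^sup>2 \<le> (1 - x\<^sup>2) * (1 - y\<^sup>2)"
proof -
  have "0 \<le> 1 - x * y - \<bar>x - y\<bar>"
  proof (cases "x \<le> y")
    case True
    have "0 \<le> (1 + x) * (1 - y)" using assms by (intro mult_nonneg_nonneg) auto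
    then show ?thesis using True by (simp add: algebra_simps)
  next
    case False
    have "0 \<le> (1 - x) * (1 + y)" using assms by (intro mult_nonneg_nonneg) auto
    then show ?thesis using False by (simp add: algebra_simps)
  qed
  moreover have "(1 - x\<^sup>2) * (1 - y\<^sup>2) - (1 - \<bar>x - y\<bar> - x * y)\<^sup>2
      = 2 * \<bar>x - y\<bar> * (1 - x * y - \<bar>x - y\<bar>)"
    by (simp add: power2_eq_square algebra_simps)
  moreover have "(w - x * y)\<^sup>2 \<le> (1 - \<bar>x - y\<bar> - x * y)\<^sup>2"
    using assms by (intro power_mono) auto
  ultimately show ?thesis
    by (smt (verit) abs_ge_zero mult_nonneg_nonneg)
qed

text \<open>The lower constraint on \<open>b\<^sub>i\<^sub>j\<close> is the upper one for \<open>(b\<^sub>i, -b\<^sub>j, -b\<^sub>i\<^sub>j)\<close>.\<close>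
lemma abs_rel_bias_le_1:
  assumes "is_config \<theta>"
  shows "\<bar>rel_bias \<theta>\<bar> \<le> 1"
proof -
  obtain x y w where \<theta>: "\<theta> = (x, y, w)" by (metis prod_cases3)
  have c: "\<bar>x\<bar> \<le> 1" "\<bar>y\<bar> \<le> 1" "-1 + \<bar>x + y\<bar> \<le> w" "w \<le> 1 - \<bar>x - y\<bar>"
    using assms by (auto simp: is_config_def \<theta>)
  have sq: "(w - x * y)\<^sup>2 \<le> (1 - x\<^sup>2) * (1 - y\<^sup>2)"
  proof (cases "x * y \<le> w")
    case True
    then show ?thesis using bias_deviation_sq_le c by blast
  next
    case False
    then have "(- w - x * (- y))\<^sup>2 \<le> (1 - x\<^sup>2) * (1 - (- y)\<^sup>2)"
      using c by (intro bias_deviation_sq_le) auto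
    then show ?thesis by (simp add: power2_eq_square algebra_simps)
  qed
  then have "\<bar>w - x * y\<bar> \<le> sqrt ((1 - x\<^sup>2) * (1 - y\<^sup>2))"
    using real_sqrt_le_mono[OF sq] by simp
  then show ?thesis
    by (auto simp: rel_bias_def \<theta> Let_def divide_le_eq_1)
qed

lemma biases_memI: "\<theta> \<in> set_pmf D \<Longrightarrow> fst \<theta> \<in> biases D \<and> fst (snd \<theta>) \<in> biases D"
  by (auto simp: biases_def)

lemma finite_biases: "is_blueprint D B \<mu> \<Longrightarrow> finite B"
  by (simp add: is_blueprint_def biases_def)

lemma soundness_t_eq_cut_prob:
  "soundness_t D t = (\<Sum>\<theta>\<in>set_pmf D. pmf D \<theta> *
     cut_prob (rel_bias \<theta>) ((1 - t (fst \<theta>)) / 2) ((1 - t (fst (snd \<theta>))) / 2))"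
  by (simp add: soundness_t_def cut_prob_def Let_def)

lemma soundness_t_le_of_close:
  assumes D: "finite (set_pmf D)" "\<forall>\<theta>\<in>set_pmf D. is_config \<theta>"
    and close: "\<forall>b\<in>biases D. t b \<in> {-1..1} \<and> t' b \<in> {-1..1} \<and> \<bar>t b - t' b\<bar> \<le> e"
  shows "soundness_t D t \<le> soundness_t D t' + e"
proof -
  define q where "q s b = (1 - s b) / 2" for s :: "real \<Rightarrow> real" and b
  define cut where "cut s \<theta> = cut_prob (rel_bias \<theta>) (q s (fst \<theta>)) (q s (fst (snd \<theta>)))"
    for s \<theta>
  have soundness_t_eq: "soundness_t D s = (\<Sum>\<theta>\<in>set_pmf D. pmf D \<theta> * cut s \<theta>)" for s
    by (simp add: soundness_t_eq_cut_prob cut_def q_def)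
  have q_range: "q t b \<in> {0..1}" "q t' b \<in> {0..1}" if "b \<in> biases D" for b
    using close that by (auto simp: q_def)
  have q_close: "\<bar>q t b - q t' b\<bar> \<le> e / 2" if "b \<in> biases D" for b
  proof -
    have "q t b - q t' b = (t' b - t b) / 2"
      by (simp add: q_def diff_divide_distrib)
    then show ?thesis
      using close that unfolding abs_le_iff by auto
  qed
  have "cut t \<theta> \<le> cut t' \<theta> + e" if "\<theta> \<in> set_pmf D" for \<theta>
  proof -
    have b: "fst \<theta> \<in> biases D" "fst (snd \<theta>) \<in> biases D"
      using biases_memI[OF that] by auto
    have "\<bar>cut t \<theta> - cut t' \<theta>\<bar>
        \<le> \<bar>q t (fst \<theta>) - q t' (fst \<theta>)\<bar> + \<bar>q t (fst (snd \<theta>)) - q t' (fst (snd \<theta>))\<bar>"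
      unfolding cut_def using b D(2) that
      by (intro cut_prob_lipschitz q_range abs_rel_bias_le_1) auto
    also have "\<dots> \<le> e / 2 + e / 2"
      using q_close b by (intro add_mono)
    finally show ?thesis by linarith
  qed
  then have "soundness_t D t \<le> (\<Sum>\<theta>\<in>set_pmf D. pmf D \<theta> * (cut t' \<theta> + e))"
    unfolding soundness_t_eq by (intro sum_mono mult_left_mono) auto
  also have "\<dots> = soundness_t D t' + e"
    using sum_pmf_eq_1[OF D(1) order_refl]
    by (simp add: soundness_t_eq distrib_left sum.distrib sum_distrib_right[symmetric])
  finally show ?thesis .
qed

definition feasible_thresholds :: "real set \<Rightarrow> real pmf \<Rightarrow> (real \<Rightarrow> real) \<Rightarrow> bool" where
  "feasible_thresholds B \<mu> t \<longleftrightarrow> (\<forall>b\<in>B. t b \<in> {-1..1}) \<and> (\<Sum>b\<in>B. pmf \<mu> b * t b) = 0"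

lemma soundness_eq_Sup:
  "soundness D B \<mu> = Sup {soundness_t D t | t. feasible_thresholds B \<mu> t}"
  by (simp add: soundness_def feasible_thresholds_def)

lemma soundness_le_of_approx:
  assumes D: "finite (set_pmf D)" "\<forall>\<theta>\<in>set_pmf D. is_config \<theta>" "B = biases D"
    and approx: "\<And>t. feasible_thresholds B \<mu>' t \<Longrightarrow>
      \<exists>t'. feasible_thresholds B \<mu> t' \<and> (\<forall>b\<in>B. \<bar>t b - t' b\<bar> \<le> e)"
  shows "soundness D B \<mu>' \<le> soundness D B \<mu> + e"
proof -
  let ?S = "\<lambda>\<nu>. {soundness_t D t | t. feasible_thresholds B \<nu> t}"
  have zero: "feasible_thresholds B \<nu> (\<lambda>_. 0)" for \<nu>
    by (simp add: feasible_thresholds_def)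
  have "soundness_t D t \<le> soundness_t D (\<lambda>_. 0) + 2" if "feasible_thresholds B \<mu> t" for t
    using that D by (intro soundness_t_le_of_close) (auto simp: feasible_thresholds_def)
  then have bdd: "bdd_above (?S \<mu>)"
    by (intro bdd_aboveI) blast
  have "Sup (?S \<mu>') \<le> Sup (?S \<mu>) + e"
  proof (rule cSup_least)
    show "?S \<mu>' \<noteq> {}" using zero by blast
    fix x assume "x \<in> ?S \<mu>'"
    then obtain t where x: "x = soundness_t D t" and t: "feasible_thresholds B \<mu>' t"
      by blast
    then obtain t' where t': "feasible_thresholds B \<mu> t'" "\<forall>b\<in>B. \<bar>t b - t' b\<bar> \<le> e"
      using approx by blast
    have "x \<le> soundness_t D t' + e"
      unfolding x using D t t'
      by (intro soundness_t_le_of_close) (auto simp: feasible_thresholds_def)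
    moreover have "soundness_t D t' \<le> Sup (?S \<mu>)"
      using t' by (intro cSup_upper bdd) blast
    ultimately show "x \<le> Sup (?S \<mu>) + e" by linarith
  qed
  then show ?thesis by (simp add: soundness_eq_Sup)
qed

lemma feasible_thresholds_recenter:
  assumes "finite B" "set_pmf \<mu> \<subseteq> B" "\<forall>b\<in>B. t b \<in> {-1..1}"
  defines "s \<equiv> \<Sum>b\<in>B. pmf \<mu> b * t b"
  obtains t' where "feasible_thresholds B \<mu> t'" "\<forall>b\<in>B. \<bar>t b - t' b\<bar> \<le> 2 * \<bar>s\<bar>"
proof
  define t' where "t' b = (t b - s) / (1 + \<bar>s\<bar>)" for b
  have pos: "1 + \<bar>s\<bar> > 0" by simp
  show "\<forall>b\<in>B. \<bar>t b - t' b\<bar> \<le> 2 * \<bar>s\<bar>"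
  proof
    fix b assume "b \<in> B"
    then have "\<bar>t b\<bar> \<le> 1" using assms(3) by auto
    have "\<bar>t b - t' b\<bar> = \<bar>\<bar>s\<bar> * t b + s\<bar> / (1 + \<bar>s\<bar>)"
      using pos by (simp add: t'_def field_simps)
    also have "\<dots> \<le> \<bar>\<bar>s\<bar> * t b + s\<bar>"
      using pos by (simp add: divide_le_eq mult_le_cancel_left1)
    also have "\<dots> \<le> \<bar>s\<bar> * \<bar>t b\<bar> + \<bar>s\<bar>"
      by (metis abs_abs abs_mult abs_triangle_ineq)
    also have "\<dots> \<le> 2 * \<bar>s\<bar>"
      using \<open>\<bar>t b\<bar> \<le> 1\<close> mult_left_le[of "\<bar>t b\<bar>" "\<bar>s\<bar>"] by simp
    finally show "\<bar>t b - t' b\<bar> \<le> 2 * \<bar>s\<bar>" .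
  qed
  have "\<forall>b\<in>B. t' b \<in> {-1..1}"
  proof
    fix b assume "b \<in> B"
    then have "\<bar>t b - s\<bar> \<le> 1 + \<bar>s\<bar>"
      using assms(3) by (auto simp: abs_le_iff)
    then have "\<bar>t' b\<bar> \<le> 1"
      using pos by (simp add: t'_def divide_le_eq_1)
    then show "t' b \<in> {-1..1}"
      by (simp add: abs_le_iff)
  qed
  moreover have "(\<Sum>b\<in>B. pmf \<mu> b * t' b)
      = ((\<Sum>b\<in>B. pmf \<mu> b * t b) - (\<Sum>b\<in>B. pmf \<mu> b) * s) / (1 + \<bar>s\<bar>)"
    by (simp add: t'_def sum_divide_distrib[symmetric] right_diff_distrib sum_subtractf
        sum_distrib_right)
  ultimately show "feasible_thresholds B \<mu> t'"
    using sum_pmf_eq_1[OF assms(1,2)] by (simp add: feasible_thresholds_def s_def)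
qed

definition mix_pmf :: "real \<Rightarrow> 'a pmf \<Rightarrow> 'a pmf \<Rightarrow> 'a pmf" where
  "mix_pmf \<alpha> p q = bernoulli_pmf \<alpha> \<bind> (\<lambda>c. if c then p else q)"

lemma pmf_mix_pmf:
  "\<alpha> \<in> {0..1} \<Longrightarrow> pmf (mix_pmf \<alpha> p q) x = \<alpha> * pmf p x + (1 - \<alpha>) * pmf q x"
  by (simp add: mix_pmf_def pmf_bind mult.commute)

lemma set_pmf_mix_pmf_subset: "set_pmf (mix_pmf \<alpha> p q) \<subseteq> set_pmf p \<union> set_pmf q"
  by (auto simp: mix_pmf_def split: if_splits)

lemma sum_pmf_mix_pmf:
  assumes "\<alpha> \<in> {0..1}"
  shows "(\<Sum>x\<in>A. pmf (mix_pmf \<alpha> p q) x * f x)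
    = \<alpha> * (\<Sum>x\<in>A. pmf p x * f x) + (1 - \<alpha>) * (\<Sum>x\<in>A. pmf q x * f x)"
  unfolding pmf_mix_pmf[OF assms]
  by (simp add: distrib_right sum.distrib sum_distrib_left mult.assoc)

lemma abs_sum_pmf_le_1:
  assumes "\<forall>x\<in>A. \<bar>f x\<bar> \<le> 1"
  shows "\<bar>\<Sum>x\<in>A. pmf p x * f x\<bar> \<le> 1"
proof (cases "finite A")
  case True
  have "\<bar>\<Sum>x\<in>A. pmf p x * f x\<bar> \<le> (\<Sum>x\<in>A. pmf p x)"
    using assms by (intro order_trans[OF sum_abs] sum_mono) (auto simp: abs_mult mult_left_le)
  also have "\<dots> = measure_pmf.prob p A"
    using True by (simp add: measure_measure_pmf_finite)
  finally show ?thesis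
    using measure_pmf.prob_le_1 order_trans by blast
qed simp

lemma abs_sum_pmf_le_of_mix_balanced:
  assumes "0 < \<delta>" "\<delta> \<le> 1 / 2" "\<forall>b\<in>B. \<bar>t b\<bar> \<le> 1"
    and balanced: "(\<Sum>b\<in>B. pmf (mix_pmf \<delta> \<nu> \<mu>) b * t b) = 0"
  shows "\<bar>\<Sum>b\<in>B. pmf \<mu> b * t b\<bar> \<le> 2 * \<delta>"
proof -
  define s where "s = (\<Sum>b\<in>B. pmf \<mu> b * t b)"
  define r where "r = (\<Sum>b\<in>B. pmf \<nu> b * t b)"
  have "\<delta> * r + (1 - \<delta>) * s = 0"
    using balanced assms(1,2) by (simp add: sum_pmf_mix_pmf r_def s_def)
  then have "\<bar>(1 - \<delta>) * s\<bar> = \<bar>\<delta> * r\<bar>"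
    by (simp add: eq_neg_iff_add_eq_0[symmetric] add.commute)
  then have "(1 - \<delta>) * \<bar>s\<bar> = \<delta> * \<bar>r\<bar>"
    using assms(1,2) by (simp add: abs_mult)
  also have "\<dots> \<le> \<delta>"
    using abs_sum_pmf_le_1[OF assms(3)] assms(1) by (simp add: r_def mult_left_le)
  finally have "(1 - \<delta>) * \<bar>s\<bar> \<le> \<delta>" .
  moreover have "\<bar>s\<bar> / 2 \<le> (1 - \<delta>) * \<bar>s\<bar>"
    using assms(2) mult_right_mono[of "1 / 2" "1 - \<delta>" "\<bar>s\<bar>"] by simp
  ultimately show ?thesis
    unfolding s_def by linarith
qed

lemma is_blueprint_mix_pmf:
  assumes "is_blueprint D B \<mu>" "set_pmf \<nu> \<subseteq> B" "(\<Sum>b\<in>B. pmf \<nu> b * b) = 0" "\<alpha> \<in> {0..1}"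
  shows "is_blueprint D B (mix_pmf \<alpha> \<nu> \<mu>)"
  using assms set_pmf_mix_pmf_subset[of \<alpha> \<nu> \<mu>]
  by (auto simp: is_blueprint_def sum_pmf_mix_pmf)

lemma soundness_mix_pmf_le:
  assumes "is_blueprint D B \<mu>" "0 < \<delta>" "\<delta> \<le> 1 / 2"
  shows "soundness D B (mix_pmf \<delta> \<nu> \<mu>) \<le> soundness D B \<mu> + 4 * \<delta>"
proof (rule soundness_le_of_approx)
  show "finite (set_pmf D)" "\<forall>\<theta>\<in>set_pmf D. is_config \<theta>" "B = biases D"
    using assms(1) by (auto simp: is_blueprint_def)
  fix t assume t: "feasible_thresholds B (mix_pmf \<delta> \<nu> \<mu>) t"
  then have "\<bar>\<Sum>b\<in>B. pmf \<mu> b * t b\<bar> \<le> 2 * \<delta>"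
    using assms(2,3) by (intro abs_sum_pmf_le_of_mix_balanced) (auto simp: feasible_thresholds_def)
  moreover have "finite B" "set_pmf \<mu> \<subseteq> B" "\<forall>b\<in>B. t b \<in> {-1..1}"
    using t assms(1) finite_biases by (auto simp: feasible_thresholds_def is_blueprint_def)
  then obtain t' where "feasible_thresholds B \<mu> t'"
      "\<forall>b\<in>B. \<bar>t b - t' b\<bar> \<le> 2 * \<bar>\<Sum>b\<in>B. pmf \<mu> b * t b\<bar>"
    by (rule feasible_thresholds_recenter)
  ultimately show "\<exists>t'. feasible_thresholds B \<mu> t' \<and> (\<forall>b\<in>B. \<bar>t b - t' b\<bar> \<le> 4 * \<delta>)"
    by force
qed

text \<open>Since \<open>c\<close> lies on the other side of \<open>0\<close> from the mean \<open>S\<close> of the uniform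
  distribution, the weight \<open>c / (c - S)\<close> lies in \<open>(0, 1]\<close> and makes the mixture's mean vanish.\<close>
lemma mean_zero_pmf_with_full_support:
  fixes B :: "real set"
  assumes "finite B" "p \<in> B" "p > 0" "n \<in> B" "n < 0"
  obtains \<nu> m where "m > 0" "set_pmf \<nu> \<subseteq> B" "(\<Sum>b\<in>B. pmf \<nu> b * b) = 0"
    "\<forall>b\<in>B. pmf \<nu> b \<ge> m"
proof -
  have "B \<noteq> {}" using assms(2) by blast
  define S where "S = (\<Sum>b\<in>B. b) / card B"
  define c where "c = (if S \<ge> 0 then n else p)"
  define \<alpha> where "\<alpha> = c / (c - S)"
  have "c \<in> B" using assms by (simp add: c_def)
  have \<alpha>: "0 < \<alpha>" "\<alpha> \<le> 1"
    using assms by (auto simp: \<alpha>_def c_def divide_le_eq_1 zero_less_divide_iff)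
  have "\<alpha> * (S - c) = - c"
    using assms by (auto simp: \<alpha>_def c_def field_simps)
  define \<nu> where "\<nu> = mix_pmf \<alpha> (pmf_of_set B) (return_pmf c)"
  show thesis
  proof (rule that[of "\<alpha> / card B" \<nu>])
    show "\<alpha> / card B > 0"
      using \<alpha> assms(1) \<open>B \<noteq> {}\<close> by (simp add: card_gt_0_iff)
    show "set_pmf \<nu> \<subseteq> B"
      using set_pmf_mix_pmf_subset[of \<alpha> "pmf_of_set B" "return_pmf c"] assms(1) \<open>B \<noteq> {}\<close> \<open>c \<in> B\<close>
      by (simp add: \<nu>_def insert_absorb)
    have "(\<Sum>b\<in>B. pmf \<nu> b * b) = \<alpha> * S + (1 - \<alpha>) * c"
      using \<alpha> assms(1) \<open>B \<noteq> {}\<close> \<open>c \<in> B\<close>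
      by (simp add: \<nu>_def sum_pmf_mix_pmf S_def sum_divide_distrib indicator_def)
    then show "(\<Sum>b\<in>B. pmf \<nu> b * b) = 0"
      using \<open>\<alpha> * (S - c) = - c\<close> by (simp add: algebra_simps)
    show "\<forall>b\<in>B. pmf \<nu> b \<ge> \<alpha> / card B"
      using \<alpha> assms(1) \<open>B \<noteq> {}\<close> by (simp add: \<nu>_def pmf_mix_pmf)
  qed
qed

lemma blueprint_reweighting_mix_pmf:
  assumes \<mu>: "is_blueprint D B \<mu>"
    and \<nu>: "set_pmf \<nu> \<subseteq> B" "(\<Sum>b\<in>B. pmf \<nu> b * b) = 0" "\<forall>b\<in>B. pmf \<nu> b \<ge> m"
    and \<epsilon>: "0 < \<epsilon>" "\<epsilon> < m / 2"
  defines "\<mu>' \<equiv> mix_pmf (\<epsilon> / m) \<nu> \<mu>"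
  shows "is_blueprint D B \<mu>'" "soundness D B \<mu>' \<le> soundness D B \<mu> + 4 / m * \<epsilon>"
    "\<forall>b\<in>B. pmf \<mu>' b \<ge> \<epsilon>"
proof -
  define \<delta> where "\<delta> = \<epsilon> / m"
  have \<delta>: "0 < \<delta>" "\<delta> \<le> 1 / 2" "\<delta> * m = \<epsilon>"
    using \<epsilon> by (auto simp: \<delta>_def field_simps)
  show "is_blueprint D B \<mu>'"
    unfolding \<mu>'_def \<delta>_def[symmetric] using \<mu> \<nu> \<delta> by (intro is_blueprint_mix_pmf) auto
  show "soundness D B \<mu>' \<le> soundness D B \<mu> + 4 / m * \<epsilon>"
    unfolding \<mu>'_def using soundness_mix_pmf_le[OF \<mu> \<delta>(1,2)] by (simp add: \<delta>_def)
  show "\<forall>b\<in>B. pmf \<mu>' b \<ge> \<epsilon>"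
  proof
    fix b assume "b \<in> B"
    then have "\<delta> * m \<le> \<delta> * pmf \<nu> b"
      using \<nu>(3) \<delta>(1) by (simp add: mult_left_mono)
    then show "pmf \<mu>' b \<ge> \<epsilon>"
      unfolding \<mu>'_def \<delta>_def[symmetric] using \<delta> by (simp add: pmf_mix_pmf add_increasing2)
  qed
qed

theorem corollary2p17:
  fixes B :: "real set"
  assumes "\<exists>b\<in>B. b > 0" and "\<exists>b\<in>B. b < 0"
  shows "\<exists>\<epsilon>0 C. \<epsilon>0 > 0 \<and> C > 0 \<and>
    (\<forall>D \<mu>. is_blueprint D B \<mu> \<longrightarrow>
      (\<forall>\<epsilon>. 0 < \<epsilon> \<and> \<epsilon> < \<epsilon>0 \<longrightarrow>
        (\<exists>\<mu>'. is_blueprint D B \<mu>' \<and>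
              completeness D = completeness D \<and>
              soundness D B \<mu>' \<le> soundness D B \<mu> + C * \<epsilon> \<and>
              (\<forall>b\<in>B. pmf \<mu>' b \<ge> \<epsilon>))))"
proof (cases "finite B")
  case False
  then have "\<not> is_blueprint D B \<mu>" for D \<mu>
    by (auto dest: finite_biases)
  then show ?thesis
    by (intro exI[of _ 1] conjI) simp_all
next
  case True
  obtain p n where "p \<in> B" "p > 0" "n \<in> B" "n < 0"
    using assms by blast
  then obtain \<nu> m where m: "m > 0" and \<nu>: "set_pmf \<nu> \<subseteq> B" "(\<Sum>b\<in>B. pmf \<nu> b * b) = 0"
    "\<forall>b\<in>B. pmf \<nu> b \<ge> m"
    by (rule mean_zero_pmf_with_full_support[OF True])
  show ?thesis
  proof (rule exI[of _ "m / 2"], rule exI[of _ "4 / m"], intro conjI allI impI)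
    fix D \<mu> \<epsilon>
    assume \<mu>: "is_blueprint D B \<mu>" and "0 < \<epsilon> \<and> \<epsilon> < m / 2"
    then have "0 < \<epsilon>" "\<epsilon> < m / 2" by auto
    note \<mu>' = blueprint_reweighting_mix_pmf[OF \<mu> \<nu> this]
    show "\<exists>\<mu>'. is_blueprint D B \<mu>' \<and> completeness D = completeness D \<and>
        soundness D B \<mu>' \<le> soundness D B \<mu> + 4 / m * \<epsilon> \<and> (\<forall>b\<in>B. \<epsilon> \<le> pmf \<mu>' b)"
      using \<mu>' by blast
  qed (use m in auto)
qed

end
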